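(* Let $g\colon\mathbb{S}^1\to\mathbb{S}^1$ be an orientation-preserving $L$-bi-Lipschitz homeomorphism (with respect to $\sigma$), and let $\psi\colon Z_2\to Z_2$ be the map obtained from its radial extension as in the context. Then $\psi$ is $L$-bi-Lipschitz with respect to $\sigma$.
   Context: Let $\mathbb{S}^2\subset\mathbb{R}^3$ be the unit sphere with great-circle distance $\sigma$, $\mathbb{S}^1$ the equator, $Z_2$ the open northern hemisphere ($(0,0,1)\in Z_2$). Let $P(x_1,x_2,x_3)=(x_1,x_2)/(1+x_3)$ be the stereographic projection from the south pole $(0,0,-1)$ onto $\mathbb{R}^2$; it fixes $\mathbb{S}^1$ (identified with the unit circle) and maps $Z_2$ onto the open unit disk. Set $\widetilde g=P\circ g\circ P^{-1}$ on the unit circle, and let $\widetilde G\colon\mathbb{R}\to\mathbb{R}$ be a homeomorphism with $\widetilde g(e^{i\theta})=e^{i\widetilde G(\theta)}$. The radial extension is $\widetilde\psi(re^{i\theta})=re^{i\widetilde G(\theta)}$ for $0\le r\le1$, and $\psi=P^{-1}\circ\widetilde\psi\circ P|_{Z_2}$. *)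

theory Defs
  imports "HOL-Analysis.Analysis"
begin

definition S2 :: "(real^3) set" where
  "S2 = {x. norm x = 1}"

definition sigma :: "real^3 \<Rightarrow> real^3 \<Rightarrow> real" where
  "sigma x y = arccos (x \<bullet> y)"

definition S1 :: "(real^3) set" where
  "S1 = {x \<in> S2. x$3 = 0}"

definition Z2 :: "(real^3) set" where
  "Z2 = {x \<in> S2. x$3 > 0}"

text \<open>Stereographic projection from the south pole and its inverse.\<close>
definition P :: "real^3 \<Rightarrow> complex" where
  "P x = Complex (x$1 / (1 + x$3)) (x$2 / (1 + x$3))"

definition Pinv :: "complex \<Rightarrow> real^3" where
  "Pinv z = vector [2 * Re z / (1 + (cmod z)\<^sup>2), 2 * Im z / (1 + (cmod z)\<^sup>2),
                    (1 - (cmod z)\<^sup>2) / (1 + (cmod z)\<^sup>2)]"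

definition bilip_sigma :: "real \<Rightarrow> (real^3 \<Rightarrow> real^3) \<Rightarrow> (real^3) set \<Rightarrow> bool" where
  "bilip_sigma L f A \<longleftrightarrow>
     (\<forall>x\<in>A. \<forall>y\<in>A. sigma x y \<le> L * sigma (f x) (f y) \<and> sigma (f x) (f y) \<le> L * sigma x y)"

definition gt :: "(real^3 \<Rightarrow> real^3) \<Rightarrow> complex \<Rightarrow> complex" where
  "gt g = P \<circ> g \<circ> Pinv"

definition orientation_preserving :: "(real^3 \<Rightarrow> real^3) \<Rightarrow> bool" where
  "orientation_preserving g \<longleftrightarrow>
     (\<exists>G::real \<Rightarrow> real. continuous_on UNIV G \<and> strict_mono G \<and>
        (\<forall>\<theta>. gt g (cis \<theta>) = cis (G \<theta>)))"

definition psit :: "(real \<Rightarrow> real) \<Rightarrow> complex \<Rightarrow> complex" where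
  "psit G z = complex_of_real (cmod z) * cis (G (Arg z))"

definition psi :: "(real \<Rightarrow> real) \<Rightarrow> real^3 \<Rightarrow> real^3" where
  "psi G x = Pinv (psit G (P x))"

end

theory Submission
  imports Defs
begin

text \<open>
  Write points of the disk in polar form \<open>r e\<^sup>i\<^sup>a\<close>. For two points with fixed radii
  \<open>r\<^sub>1, r\<^sub>2 < 1\<close>, the spherical distance of their preimages under the stereographic
  projection is \<open>F t = arccos (c + B cos t)\<close>, where \<open>t\<close> is the angular distance of the
  arguments and \<open>c, B \<ge> 0\<close>, \<open>c + B \<le> 1\<close> depend only on the radii. The map \<open>\<psi>\<close> keeps
  the radii and replaces \<open>t\<close> by the angular distance \<open>t'\<close> of the images under \<open>G\<close>,
  which satisfies \<open>t' \<le> L t\<close> and \<open>t \<le> L t'\<close> because \<open>g\<close> is \<open>L\<close>-bi-Lipschitz on the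
  equator. Hence it suffices that \<open>F\<close> is nondecreasing and \<open>F t / t\<close> is nonincreasing
  on \<open>(0, \<pi>]\<close>. The latter amounts to \<open>B t sin t \<le> F t sin (F t)\<close>, which follows from
  the monotonicity of \<open>x cot x\<close>.
\<close>

lemma x_cot_x_antimono:
  fixes x y :: real
  assumes "0 < x" "x \<le> y" "y < pi"
  shows "y * cos y / sin y \<le> x * cos x / sin x"
proof -
  have "(\<lambda>z. z * cos z / sin z) y \<le> (\<lambda>z. z * cos z / sin z) x"
  proof (rule DERIV_nonpos_imp_nonincreasing[OF assms(2)])
    fix z assume z: "x \<le> z" "z \<le> y"
    have sin_pos: "sin z > 0" using z assms by (intro sin_gt_zero) auto
    have pythagoras: "z * (cos z * cos z) + z * (sin z * sin z) = z"
      using sin_cos_squared_add[of z] by (simp add: power2_eq_square flip: distrib_left)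
    have "((\<lambda>z. z * cos z / sin z) has_real_derivative (sin z * cos z - z) / (sin z * sin z)) (at z)"
      using sin_pos by (auto intro!: derivative_eq_intros simp: field_simps pythagoras)
    moreover have "sin z * cos z \<le> z"
      using sin_x_le_x[of "2*z"] z assms by (simp add: sin_double)
    ultimately show "\<exists>d. ((\<lambda>z. z * cos z / sin z) has_real_derivative d) (at z) \<and> d \<le> 0"
      by (meson diff_le_0_iff_le divide_nonpos_nonneg mult_nonneg_nonneg less_imp_le sin_pos)
  qed
  then show ?thesis by simp
qed

lemma one_plus_cos_div_sin_eq_half_cot:
  fixes z :: real
  assumes "cos (z/2) \<noteq> 0"
  shows "(1 + cos z) / sin z = cos (z/2) / sin (z/2)"
proof -
  have "1 + cos z = 2 * cos (z/2) * cos (z/2)"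
    using cos_double_cos[of "z/2"] by (simp add: power2_eq_square)
  moreover have "sin z = 2 * sin (z/2) * cos (z/2)"
    using sin_double[of "z/2"] by simp
  ultimately show ?thesis using assms by simp
qed

lemma x_half_cot_antimono:
  fixes x y :: real
  assumes "0 < x" "x \<le> y" "y < pi"
  shows "y * (1 + cos y) / sin y \<le> x * (1 + cos x) / sin x"
proof -
  have half_cot: "z * (1 + cos z) / sin z = 2 * ((z/2) * cos (z/2) / sin (z/2))"
    if "0 < z" "z < pi" for z :: real
  proof -
    have "cos (z/2) \<noteq> 0" using that by (intro order.strict_implies_not_eq[symmetric] cos_gt_zero_pi) auto
    then show ?thesis using one_plus_cos_div_sin_eq_half_cot[of z] by (simp flip: times_divide_eq_right)
  qed
  have "(y/2) * cos (y/2) / sin (y/2) \<le> (x/2) * cos (x/2) / sin (x/2)"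
    using assms by (intro x_cot_x_antimono) auto
  moreover have "y * (1 + cos y) / sin y = 2 * ((y/2) * cos (y/2) / sin (y/2))"
    and "x * (1 + cos x) / sin x = 2 * ((x/2) * cos (x/2) / sin (x/2))"
    using assms half_cot[of x] half_cot[of y] by auto
  ultimately show ?thesis by linarith
qed

locale arccos_profile =
  fixes c B :: real
  assumes c_nonneg: "c \<ge> 0" and B_pos: "B > 0" and c_plus_B_le_1: "c + B \<le> 1"
begin

definition F :: "real \<Rightarrow> real" where "F t = arccos (c + B * cos t)"

lemma arg_bounds: "-1 \<le> c + B * cos t" "c + B * cos t \<le> 1"
proof -
  have "- B \<le> B * cos t" "B * cos t \<le> B"
    using B_pos mult_left_mono[OF cos_ge_minus_one[of t], of B] mult_left_mono[OF cos_le_one[of t], of B]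
    by simp_all
  then show "-1 \<le> c + B * cos t" "c + B * cos t \<le> 1" using c_nonneg c_plus_B_le_1 by linarith+
qed

lemma arg_strict_bounds:
  assumes "0 < t" "t < pi"
  shows "-1 < c + B * cos t" "c + B * cos t < 1"
proof -
  have "-1 < cos t" "cos t < 1"
    using assms cos_monotone_0_pi[of 0 t] cos_monotone_0_pi[of t pi] by auto
  then have "- B < B * cos t" "B * cos t < B"
    using B_pos mult_strict_left_mono[of "-1" "cos t" B] mult_strict_left_mono[of "cos t" 1 B]
    by simp_all
  then show "-1 < c + B * cos t" "c + B * cos t < 1" using c_nonneg c_plus_B_le_1 by linarith+
qed

lemma cos_F: "cos (F t) = c + B * cos t"
  unfolding F_def using arg_bounds by (simp add: cos_arccos)

lemma sin_F: "sin (F t) = sqrt (1 - (c + B * cos t)\<^sup>2)"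
  unfolding F_def using arg_bounds by (simp add: sin_arccos)

lemma F_bounds: "0 \<le> F t" "F t \<le> pi"
  unfolding F_def using arg_bounds by (auto intro: arccos_lbound arccos_ubound)

lemma F_strict_bounds:
  assumes "0 < t" "t < pi"
  shows "sin (F t) > 0" "0 < F t" "F t < pi"
proof -
  have "(c + B * cos t)\<^sup>2 < 1"
    using arg_strict_bounds[OF assms] by (simp add: abs_square_less_1)
  then show "sin (F t) > 0" by (simp add: sin_F)
  then show "0 < F t" "F t < pi" using F_bounds[of t] by (auto intro: ccontr)
qed

lemma has_real_derivative_F:
  assumes "0 < t" "t < pi"
  shows "(F has_real_derivative (B * sin t / sin (F t))) (at t)"
proof -
  have inner_deriv: "((\<lambda>t. c + B * cos t) has_real_derivative (B * - sin t)) (at t)"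
    by (auto intro!: derivative_eq_intros)
  have "((\<lambda>t. arccos (c + B * cos t)) has_real_derivative
          inverse (- sqrt (1 - (c + B * cos t)\<^sup>2)) * (B * - sin t)) (at t)"
    by (rule DERIV_chain2[OF DERIV_arccos[OF arg_strict_bounds[OF assms]] inner_deriv])
  moreover have "inverse (- sqrt (1 - (c + B * cos t)\<^sup>2)) * (B * - sin t) = B * sin t / sin (F t)"
    by (simp add: sin_F field_simps)
  ultimately show ?thesis unfolding F_def[abs_def] by simp
qed

lemma continuous_on_F: "continuous_on A F"
  unfolding F_def[abs_def] using arg_bounds by (intro continuous_intros) auto

lemma F_mono:
  assumes "0 \<le> t" "t \<le> t'" "t' \<le> pi"
  shows "F t \<le> F t'"
proof -
  have "cos t' \<le> cos t" using cos_monotone_0_pi_le assms by auto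
  then have "c + B * cos t' \<le> c + B * cos t" using B_pos by simp
  then show ?thesis unfolding F_def using arg_bounds by (intro arccos_le_arccos) auto
qed

lemma F_sin_F_ge_if_F_le:
  assumes "0 < t" "t \<le> pi" "F t \<le> t"
  shows "B * t * sin t \<le> F t * sin (F t)"
proof (cases "t = pi")
  case True
  then show ?thesis using F_bounds[of t] by (simp add: sin_ge_zero)
next
  case False
  then have t_less_pi: "t < pi" using assms by simp
  note F_t = F_strict_bounds[OF assms(1) t_less_pi]
  have sin_t: "sin t > 0" using assms t_less_pi by (intro sin_gt_zero) auto
  define k where "k z = z * (1 + cos z) / sin z" for z :: real
  have k_mult: "k z * (1 - cos z) = z * sin z" if "sin z \<noteq> 0" for z
  proof -
    have "(1 + cos z) * (1 - cos z) = sin z * sin z"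
      using sin_cos_squared_add[of z] by (simp add: power2_eq_square algebra_simps)
    then have "k z * (1 - cos z) = z * (sin z * sin z) / sin z"
      unfolding k_def by (simp add: mult.assoc)
    then show ?thesis using that by simp
  qed
  have k_nonneg: "k t \<ge> 0"
    unfolding k_def using assms sin_t cos_ge_minus_one[of t]
    by (intro divide_nonneg_pos mult_nonneg_nonneg) linarith+
  have "B * t * sin t = k t * (B * (1 - cos t))" using k_mult[of t] sin_t by simp
  also have "\<dots> \<le> k t * (1 - cos (F t))"
    using cos_F[of t] c_plus_B_le_1 k_nonneg by (intro mult_left_mono) (auto simp: algebra_simps)
  also have "\<dots> \<le> k (F t) * (1 - cos (F t))"
    unfolding k_def using x_half_cot_antimono[OF F_t(2) assms(3) t_less_pi]
    by (intro mult_right_mono) auto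
  also have "\<dots> = F t * sin (F t)" using k_mult[of "F t"] F_t by simp
  finally show ?thesis .
qed

text \<open>
  Let \<open>T \<ge> t\<close> be the first point with \<open>F T \<le> T\<close> (it exists since \<open>F \<pi> \<le> \<pi>\<close>). The
  inequality holds at \<open>T\<close> by the previous lemma, and on \<open>(t, T)\<close>, where \<open>F s > s\<close>,
  the difference \<open>F s sin (F s) - B s sin s\<close> has derivative
  \<open>B sin s (F s cot (F s) - s cot s) \<le> 0\<close>.
\<close>
lemma F_sin_F_ge:
  assumes "0 < t" "t < pi"
  shows "B * t * sin t \<le> F t * sin (F t)"
proof -
  define S where "S = {t..pi} \<inter> {s. F s \<le> s}"
  have "closed S" unfolding S_def
    by (intro closed_Int closed_atLeastAtMost closed_Collect_le continuous_on_F continuous_on_id)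
  moreover have "pi \<in> S" unfolding S_def using assms F_bounds[of pi] by auto
  moreover have bdd: "bdd_below S" unfolding S_def by (rule bdd_belowI[of _ t]) auto
  ultimately have "Inf S \<in> S" using closed_contains_Inf by blast
  then obtain T where T: "t \<le> T" "T \<le> pi" "F T \<le> T" and T_def: "T = Inf S"
    unfolding S_def by auto
  have above_diagonal: "s < F s" if "t \<le> s" "s < T" for s
  proof (rule ccontr)
    assume "\<not> s < F s"
    then have "s \<in> S" unfolding S_def using that T by auto
    then show False using cInf_lower[OF _ bdd] that T_def by fastforce
  qed
  define D where "D s = F s * sin (F s) - B * s * sin s" for s
  have "D T \<le> D t"
  proof (rule DERIV_nonpos_imp_decreasing_open[OF T(1)])
    show "continuous_on {t..T} D" unfolding D_def[abs_def]
      by (intro continuous_intros continuous_on_F)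
  next
    fix s assume s: "t < s" "s < T"
    have s_range: "0 < s" "s < pi" using s assms T by auto
    note F_s = F_strict_bounds[OF s_range]
    have sin_s: "sin s > 0" using s_range by (intro sin_gt_zero) auto
    have "(D has_real_derivative
        (B * sin s / sin (F s) * sin (F s) + F s * (cos (F s) * (B * sin s / sin (F s)))
          - B * (sin s + s * cos s))) (at s)"
      unfolding D_def[abs_def]
      by (auto intro!: derivative_eq_intros has_real_derivative_F[OF s_range] simp: algebra_simps)
    moreover have "B * sin s / sin (F s) * sin (F s) + F s * (cos (F s) * (B * sin s / sin (F s)))
          - B * (sin s + s * cos s)
        = B * sin s * (F s * cos (F s) / sin (F s) - s * cos s / sin s)"
      using F_s sin_s by (simp add: field_simps)
    moreover have "F s * cos (F s) / sin (F s) \<le> s * cos s / sin s"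
      using x_cot_x_antimono[OF s_range(1) _ F_s(3)] above_diagonal[of s] s by simp
    then have "B * sin s * (F s * cos (F s) / sin (F s) - s * cos s / sin s) \<le> 0"
      using B_pos sin_s by (intro mult_nonneg_nonpos) auto
    ultimately show "\<exists>y. (D has_real_derivative y) (at s) \<and> y \<le> 0"
      by auto
  qed
  moreover have "D T \<ge> 0" unfolding D_def using F_sin_F_ge_if_F_le[of T] T assms by simp
  ultimately show ?thesis unfolding D_def by simp
qed

lemma F_div_antimono:
  assumes "0 < t" "t \<le> t'" "t' \<le> pi"
  shows "F t' / t' \<le> F t / t"
proof (rule DERIV_nonpos_imp_decreasing_open[OF assms(2)])
  show "continuous_on {t..t'} (\<lambda>s. F s / s)"
    using assms by (intro continuous_intros continuous_on_F) auto
next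
  fix s assume s: "t < s" "s < t'"
  have s_range: "0 < s" "s < pi" using s assms by auto
  have "((\<lambda>s. F s / s) has_real_derivative
      ((B * sin s / sin (F s)) * s - F s * 1) / (s * s)) (at s)"
    using s_range by (auto intro!: derivative_eq_intros has_real_derivative_F[OF s_range])
  moreover have "B * sin s / sin (F s) * s \<le> F s"
    using F_sin_F_ge[OF s_range] F_strict_bounds[OF s_range]
    by (simp add: pos_divide_le_eq algebra_simps)
  then have "((B * sin s / sin (F s)) * s - F s * 1) / (s * s) \<le> 0"
    by (intro divide_nonpos_nonneg) auto
  ultimately show "\<exists>y. ((\<lambda>s. F s / s) has_real_derivative y) (at s) \<and> y \<le> 0"
    by blast
qed

lemma F_dilation:
  assumes "1 \<le> L" "0 \<le> t" "t \<le> pi" "0 \<le> t'" "t' \<le> pi" "t' \<le> L * t"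
  shows "F t' \<le> L * F t"
proof (cases "t' \<le> t")
  case True
  then have "F t' \<le> F t" using F_mono assms by auto
  also have "\<dots> \<le> L * F t" using F_bounds[of t] assms(1) by (simp add: mult_le_cancel_right1)
  finally show ?thesis .
next
  case False
  then have t_pos: "0 < t" using assms by (cases "t = 0") auto
  then have "F t' \<le> t' * (F t / t)"
    using F_div_antimono[of t t'] False assms by (simp add: pos_divide_le_eq mult.commute)
  also have "\<dots> \<le> (L * t) * (F t / t)"
    using assms F_bounds[of t] t_pos by (intro mult_right_mono) auto
  finally show ?thesis using t_pos by simp
qed

end

lemma arccos_profile_dilation:
  fixes c B L t t' :: real
  assumes "c \<ge> 0" "B \<ge> 0" "c + B \<le> 1" "1 \<le> L"
    and "0 \<le> t" "t \<le> pi" "0 \<le> t'" "t' \<le> pi" "t' \<le> L * t"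
  shows "arccos (c + B * cos t') \<le> L * arccos (c + B * cos t)"
proof (cases "B = 0")
  case True
  have "0 \<le> arccos c" using assms True by (intro arccos_lbound) auto
  then show ?thesis using True assms(4) by (simp add: mult_le_cancel_right1)
next
  case False
  then interpret arccos_profile c B using assms by unfold_locales auto
  show ?thesis using F_dilation[OF assms(4-)] unfolding F_def .
qed

lemma inner_vec3: "(u::real^3) \<bullet> v = u$1 * v$1 + u$2 * v$2 + u$3 * v$3"
  by (simp add: inner_vec_def sum_3)

lemma inner_Pinv_polar:
  assumes "0 \<le> r1" "0 \<le> r2"
  shows "Pinv (complex_of_real r1 * cis a1) \<bullet> Pinv (complex_of_real r2 * cis a2)
    = ((1 - r1\<^sup>2) * (1 - r2\<^sup>2) + 4 * r1 * r2 * cos (a1 - a2)) / ((1 + r1\<^sup>2) * (1 + r2\<^sup>2))"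
proof -
  have "cmod (complex_of_real r1 * cis a1) = r1" "cmod (complex_of_real r2 * cis a2) = r2"
    using assms by (simp_all add: norm_mult)
  moreover have "1 + r1\<^sup>2 > 0" "1 + r2\<^sup>2 > 0" "1 + (r1\<^sup>2 + (r2\<^sup>2 + r1\<^sup>2 * r2\<^sup>2)) > 0"
    by (auto intro!: add_pos_nonneg)
  ultimately show ?thesis
    unfolding Pinv_def inner_vec3 vector_3 rcis_def[symmetric] Re_rcis Im_rcis
    by (simp only: times_divide_times_eq add_divide_distrib[symmetric] cos_diff)
       (simp add: algebra_simps)
qed

lemma sigma_Pinv_polar:
  assumes "0 \<le> r1" "0 \<le> r2"
  defines "D \<equiv> (1 + r1\<^sup>2) * (1 + r2\<^sup>2)"
  shows "sigma (Pinv (complex_of_real r1 * cis a1)) (Pinv (complex_of_real r2 * cis a2))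
    = arccos ((1 - r1\<^sup>2) * (1 - r2\<^sup>2) / D + 4 * r1 * r2 / D * cos (arccos (cos (a1 - a2))))"
  unfolding sigma_def inner_Pinv_polar[OF assms(1,2)] D_def
  by (simp add: cos_arccos add_divide_distrib)

lemma sigma_Pinv_polar_dilation:
  fixes r1 r2 a1 a2 b1 b2 L :: real
  assumes "0 \<le> r1" "r1 \<le> 1" "0 \<le> r2" "r2 \<le> 1" "1 \<le> L"
    and "arccos (cos (b1 - b2)) \<le> L * arccos (cos (a1 - a2))"
  shows "sigma (Pinv (complex_of_real r1 * cis b1)) (Pinv (complex_of_real r2 * cis b2))
    \<le> L * sigma (Pinv (complex_of_real r1 * cis a1)) (Pinv (complex_of_real r2 * cis a2))"
proof -
  define D where "D = (1 + r1\<^sup>2) * (1 + r2\<^sup>2)"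
  have D_pos: "D > 0" unfolding D_def by (intro mult_pos_pos add_pos_nonneg) auto
  have "(1 - r1\<^sup>2) * (1 - r2\<^sup>2) / D \<ge> 0"
    using assms D_pos by (intro divide_nonneg_pos mult_nonneg_nonneg) (auto simp: power_le_one)
  moreover have "4 * r1 * r2 / D \<ge> 0" using assms D_pos by simp
  moreover have "(1 - r1\<^sup>2) * (1 - r2\<^sup>2) + 4 * r1 * r2 \<le> D"
    using zero_le_power2[of "r1 - r2"] unfolding D_def by (simp add: algebra_simps power2_eq_square)
  then have "(1 - r1\<^sup>2) * (1 - r2\<^sup>2) / D + 4 * r1 * r2 / D \<le> 1"
    using D_pos by (simp add: add_divide_distrib[symmetric] divide_le_eq)
  ultimately show ?thesis
    unfolding sigma_Pinv_polar[OF assms(1,3)] D_def[symmetric]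
    using assms(5,6) by (intro arccos_profile_dilation) (auto intro: arccos_lbound arccos_ubound)
qed

lemma Pinv_P:
  assumes "x \<in> S2" "x$3 \<noteq> -1"
  shows "Pinv (P x) = x" and "(cmod (P x))\<^sup>2 = (1 - x$3) / (1 + x$3)"
proof -
  have "(norm x)\<^sup>2 = 1" using assms(1) by (simp add: S2_def)
  then have sphere: "(x$1)\<^sup>2 + (x$2)\<^sup>2 = (1 - x$3) * (1 + x$3)"
    unfolding power2_norm_eq_inner inner_vec3 by (simp add: algebra_simps power2_eq_square)
  have denom: "1 + x$3 \<noteq> 0" using assms(2) by (metis add.commute add_eq_0_iff)
  have "(cmod (P x))\<^sup>2 = ((x$1)\<^sup>2 + (x$2)\<^sup>2) / (1 + x$3)\<^sup>2"
    unfolding P_def cmod_power2 by (simp add: power_divide add_divide_distrib)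
  also have "\<dots> = (1 - x$3) / (1 + x$3)"
    using denom unfolding sphere by (simp add: power2_eq_square)
  finally show cmod_P: "(cmod (P x))\<^sup>2 = (1 - x$3) / (1 + x$3)" .
  have "1 + (cmod (P x))\<^sup>2 = 2 / (1 + x$3)"
    unfolding cmod_P using denom by (simp add: field_simps)
  then show "Pinv (P x) = x"
    unfolding vec_eq_iff forall_3 Pinv_def vector_3 cmod_P
    using denom by (auto simp: P_def field_simps)
qed

lemma Z2_polar:
  assumes "x \<in> Z2"
  obtains r a where "0 \<le> r" "r < 1"
    "x = Pinv (complex_of_real r * cis a)" "psi G x = Pinv (complex_of_real r * cis (G a))"
proof
  have x: "x \<in> S2" "x$3 > 0" using assms by (auto simp: Z2_def)
  then have "(cmod (P x))\<^sup>2 < 1" using Pinv_P(2)[of x] by (simp add: divide_less_eq)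
  then show "cmod (P x) < 1" by (simp add: abs_square_less_1)
  have "x = Pinv (P x)" using Pinv_P(1)[of x] x by simp
  then show "x = Pinv (complex_of_real (cmod (P x)) * cis (Arg (P x)))"
    using rcis_cmod_Arg[of "P x"] by (simp add: rcis_def)
qed (simp_all add: psi_def psit_def)

lemma circle_lift_bilip:
  assumes "homeomorphism S1 S1 g h" "bilip_sigma L g S1"
    and "\<forall>\<theta>. gt g (cis \<theta>) = cis (G \<theta>)"
  shows "arccos (cos (G a - G b)) \<le> L * arccos (cos (a - b))"
    and "arccos (cos (a - b)) \<le> L * arccos (cos (G a - G b))"
proof -
  define e where "e a = Pinv (cis a)" for a
  have e_inner: "e a \<bullet> e b = cos (a - b)" for a b
    using inner_Pinv_polar[of 1 1 a b] by (simp add: e_def)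
  have e_S1: "e a \<in> S1" for a
  proof -
    have "norm (e a) = 1" using e_inner[of a a] by (simp add: norm_eq_sqrt_inner)
    moreover have "(e a)$3 = 0" by (simp add: e_def Pinv_def)
    ultimately show ?thesis by (simp add: S1_def S2_def)
  qed
  have g_e: "g (e a) = e (G a)" for a
  proof -
    have "g (e a) \<in> S1" using assms(1) e_S1 by (auto simp: homeomorphism_def)
    then have "Pinv (P (g (e a))) = g (e a)" by (intro Pinv_P) (auto simp: S1_def)
    moreover have "P (g (e a)) = cis (G a)" using assms(3) by (simp add: gt_def e_def)
    ultimately show ?thesis by (simp add: e_def)
  qed
  show "arccos (cos (G a - G b)) \<le> L * arccos (cos (a - b))"
    and "arccos (cos (a - b)) \<le> L * arccos (cos (G a - G b))"
    using assms(2) e_S1[of a] e_S1[of b]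
    unfolding bilip_sigma_def sigma_def g_e[symmetric] e_inner[symmetric] by auto
qed

lemma one_le_bilip_constant:
  fixes a b L :: real
  assumes "a \<le> L * b" "b \<le> L * a" "0 < a" "0 \<le> b"
  shows "1 \<le> L"
proof (rule ccontr)
  assume "\<not> 1 \<le> L"
  have "L > 0" using assms by (smt (verit) mult_nonpos_nonneg)
  then have "a \<le> L * (L * a)" using assms mult_left_mono[OF assms(2), of L] by linarith
  moreover have "L * (L * a) < a" using \<open>L > 0\<close> \<open>\<not> 1 \<le> L\<close> assms(3)
    by (smt (verit) mult_less_cancel_right2 mult_strict_left_mono)
  ultimately show False by simp
qed

theorem lemma5:
  fixes g :: "real^3 \<Rightarrow> real^3" and G :: "real \<Rightarrow> real" and L :: real
  assumes "\<exists>h. homeomorphism S1 S1 g h"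
    and "orientation_preserving g"
    and "bilip_sigma L g S1"
    and "\<exists>H. homeomorphism UNIV UNIV G H"
    and "\<forall>\<theta>. gt g (cis \<theta>) = cis (G \<theta>)"
  shows "bilip_sigma L (psi G) Z2"
proof -
  obtain h where hom: "homeomorphism S1 S1 g h" using assms(1) by blast
  note lift_bilip = circle_lift_bilip[OF hom assms(3) assms(5)]
  have "1 \<le> L"
    using lift_bilip[of 0 "pi/2"]
    by (intro one_le_bilip_constant[of "pi/2" L]) (auto intro: arccos_lbound)
  show ?thesis unfolding bilip_sigma_def
  proof (intro ballI conjI)
    fix x y assume "x \<in> Z2" "y \<in> Z2"
    then obtain r1 a1 r2 a2 where
      "0 \<le> r1" "r1 < 1" "x = Pinv (complex_of_real r1 * cis a1)"
      "psi G x = Pinv (complex_of_real r1 * cis (G a1))"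
      "0 \<le> r2" "r2 < 1" "y = Pinv (complex_of_real r2 * cis a2)"
      "psi G y = Pinv (complex_of_real r2 * cis (G a2))"
      by (metis Z2_polar)
    then show "sigma x y \<le> L * sigma (psi G x) (psi G y)"
      and "sigma (psi G x) (psi G y) \<le> L * sigma x y"
      using \<open>1 \<le> L\<close> lift_bilip[of a1 a2]
      by (auto intro!: sigma_Pinv_polar_dilation)
  qed
qed

end
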